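(* Suppose Assumption V holds. For $x\in\mathcal V$, let $v_x$ and $r_x$ be as in Assumption V and let $h(y)=\langle v_x,y-x\rangle$ on $\overline G$. Then for each $x\in\mathcal V$ there exist constants $c>0$ and $C>0$ such that for all sufficiently small $\varepsilon>0$ and all $\delta\in(0,\varepsilon)$ there exists a nonnegative function $g_{\delta,\varepsilon}\in\mathcal C^2_c(\overline G)\oplus\mathbb R$ with $-g_{\delta,\varepsilon}\in\mathcal H$ such that: (1) $\sup_{y\in\overline G}g_{\delta,\varepsilon}(y)\le C\varepsilon$; (2) $\sup_{y\in\overline G}|\nabla g_{\delta,\varepsilon}(y)|\le C\sqrt\varepsilon$; (3) $\sup_{y\in\overline G}|\langle b(y),\nabla g_{\delta,\varepsilon}(y)\rangle|\le C\sqrt\varepsilon$; (4) for each $y\in\overline G\cap B_{r_x}(x)$: (a) $\sum_{i,j=1}^Ja_{ij}(y)\frac{\partial^2g_{\delta,\varepsilon}(y)}{\partial x_i\partial x_j}\ge c$ if $\delta+2\sqrt\delta<h(y)<\varepsilon/2$; (b) $\big|\sum_{i,j=1}^Ja_{ij}(y)\frac{\partial^2g_{\delta,\varepsilon}(y)}{\partial x_i\partial x_j}\big|\le C\sqrt\varepsilon$ if $h(y)\ge\varepsilon$; (c) $\sum_{i,j=1}^Ja_{ij}(y)\frac{\partial^2g_{\delta,\varepsilon}(y)}{\partial x_i\partial x_j}\ge0$ otherwise.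
   Context: $G\subset\mathbb R^J$ is a nonempty connected domain; $d(\cdot)$ is a set-valued map on $\overline G$ with $d(x)$ a nonempty closed convex cone with vertex $0$ for $x\in\partial G$, $d(x)=\{0\}$ in the interior, closed graph; $\mathcal V\subset\partial G$. $b:\mathbb R^J\to\mathbb R^J$, $\sigma:\mathbb R^J\to\mathbb R^{J\times N}$ continuous, $a=\sigma\sigma^T$. $B_r(x)=\{y:|y-x|\le r\}$. $\mathcal C^2_c(\overline G)$: restrictions to $\overline G$ of functions $\mathcal C^2$ on every open neighbourhood of $\overline G$, with compact support; $\mathcal C^2_c(\overline G)\oplus\mathbb R$: sums of such a function and a constant. $\mathcal H=\{f\in\mathcal C^2_c(\overline G)\oplus\mathbb R:f$ constant on an open neighbourhood of each point of $\mathcal V$, $\langle d,\nabla f(y)\rangle\le0$ for all $d\in d(y)$, $y\in\partial G\}$. Assumption V: $\mathcal V$ is finite and for each $x\in\mathcal V$ there exist a unit vector $v_x$ and constants $\alpha_x,r_x>0$ such that $\langle v_x,y-x\rangle\ge\alpha_x|y-x|$, $v_x^Ta(y)v_x\ge\alpha_x$ and $\langle v_x,d\rangle\ge0$ for all $d\in d(y)$ and all $y\in\overline G\cap B_{r_x}(x)$. *)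

theory Defs
  imports "HOL-Analysis.Analysis"
begin

text \<open>Points of R^J are vectors of type real^'j (J = CARD('j)).\<close>

definition pd :: "'j::finite \<Rightarrow> (real^'j \<Rightarrow> real) \<Rightarrow> real^'j \<Rightarrow> real" where
  "pd i f y = frechet_derivative f (at y) (axis i 1)"

definition grad :: "(real^'j::finite \<Rightarrow> real) \<Rightarrow> real^'j \<Rightarrow> real^'j" where
  "grad f y = (\<chi> i. pd i f y)"

definition pd2 :: "'j::finite \<Rightarrow> 'j \<Rightarrow> (real^'j \<Rightarrow> real) \<Rightarrow> real^'j \<Rightarrow> real" where
  "pd2 i j f y = pd i (pd j f) y"

definition C2_on :: "(real^'j::finite) set \<Rightarrow> (real^'j \<Rightarrow> real) \<Rightarrow> bool" where
  "C2_on U f \<longleftrightarrow> (\<forall>y\<in>U. f differentiable (at y))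
     \<and> (\<forall>j. \<forall>y\<in>U. (pd j f) differentiable (at y))
     \<and> (\<forall>i j. continuous_on U (pd2 i j f))"

text \<open>Membership of (the restriction to closure G of) f in C^2_c(closure G) \<oplus> R:
  f is C^2 on an open neighbourhood of closure G and f minus some constant has
  compact support in closure G.\<close>
definition C2c_plus_R :: "(real^'j::finite) set \<Rightarrow> (real^'j \<Rightarrow> real) \<Rightarrow> bool" where
  "C2c_plus_R G f \<longleftrightarrow> (\<exists>U k. open U \<and> closure G \<subseteq> U \<and> C2_on U f
       \<and> compact (closure {y \<in> closure G. f y \<noteq> k}))"

definition testH :: "(real^'j::finite) set \<Rightarrow> (real^'j \<Rightarrow> (real^'j) set) \<Rightarrow> (real^'j) set
      \<Rightarrow> (real^'j \<Rightarrow> real) \<Rightarrow> bool" where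
  "testH G d V f \<longleftrightarrow> C2c_plus_R G f
     \<and> (\<forall>x\<in>V. \<exists>U. open U \<and> x \<in> U \<and> (\<forall>y\<in>U \<inter> closure G. f y = f x))
     \<and> (\<forall>y\<in>frontier G. \<forall>e\<in>d y. e \<bullet> grad f y \<le> 0)"

definition diffm :: "(real^'j::finite \<Rightarrow> real^'n::finite^'j) \<Rightarrow> real^'j \<Rightarrow> real^'j^'j" where
  "diffm sg y = sg y ** transpose (sg y)"

definition assmV_at :: "(real^'j::finite) set \<Rightarrow> (real^'j \<Rightarrow> (real^'j) set) \<Rightarrow> (real^'j \<Rightarrow> real^'n::finite^'j)
      \<Rightarrow> real^'j \<Rightarrow> real^'j \<Rightarrow> real \<Rightarrow> real \<Rightarrow> bool" where
  "assmV_at G d sg x v \<alpha> r \<longleftrightarrow> norm v = 1 \<and> \<alpha> > 0 \<and> r > 0 \<and>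
     (\<forall>y\<in>closure G \<inter> cball x r.
        v \<bullet> (y - x) \<ge> \<alpha> * norm (y - x)
      \<and> v \<bullet> (diffm sg y *v v) \<ge> \<alpha>
      \<and> (\<forall>e\<in>d y. v \<bullet> e \<ge> 0))"

definition assmV :: "(real^'j::finite) set \<Rightarrow> (real^'j \<Rightarrow> (real^'j) set) \<Rightarrow> (real^'j \<Rightarrow> real^'n::finite^'j)
      \<Rightarrow> (real^'j) set \<Rightarrow> bool" where
  "assmV G d sg V \<longleftrightarrow> finite V \<and> (\<forall>x\<in>V. \<exists>v \<alpha> r. assmV_at G d sg x v \<alpha> r)"

end

theory Submission
  imports Defs
begin

text \<open>Near the vertex \<open>x\<close> the domain lies in the cone \<open>\<alpha> |y - x| \<le> h y\<close>, \<open>h y = v \<bullet> (y - x)\<close>,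
  so the barrier is taken as a ridge function \<open>g = f \<circ> h\<close> of a one-variable profile \<open>f\<close>. Then
  \<open>\<nabla>g = f' (h y) v\<close> and the trace of \<open>a D\<^sup>2g\<close> is \<open>f'' (h y) (v \<bullet> a v)\<close> with \<open>v \<bullet> a v \<ge> \<alpha>\<close>, while
  \<open>\<langle>e, \<nabla>(-g)\<rangle> = - f' (h y) (v \<bullet> e) \<le> 0\<close> because \<open>f' \<ge> 0\<close>. The profile has \<open>f'' = 1\<close> on
  \<open>[\<delta>, \<epsilon>/2]\<close>, \<open>f'' \<ge> 0\<close> before \<open>\<epsilon>\<close>, and beyond \<open>\<epsilon>\<close> a negative bump of height \<open>\<surd>\<epsilon>\<close> and width
  \<open>\<surd>\<epsilon>\<close> bringing \<open>f'\<close> back to 0; hence \<open>f' \<le> \<epsilon>\<close>, \<open>f \<le> 2\<epsilon>\<close>, \<open>f\<close> vanishes near 0 and is constant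
  beyond \<open>\<epsilon> + \<surd>\<epsilon>\<close>. Taking \<open>\<epsilon> + \<surd>\<epsilon>\<close> below \<open>\<alpha>\<close> times the distance to the other vertices
  makes \<open>g\<close> locally constant at every vertex and lets it be cut off to a constant away from \<open>x\<close>.\<close>

section \<open>Truncated powers and the one-dimensional profile\<close>

definition ramp :: "nat \<Rightarrow> real \<Rightarrow> real" where
  "ramp n s = max 0 s ^ n / fact n"

lemma ramp_has_real_derivative:
  assumes "0 < n"
  shows "(ramp (Suc n) has_real_derivative ramp n s) (at s)"
proof (cases s "0::real" rule: linorder_cases)
  case less
  have "((\<lambda>_. 0) has_real_derivative ramp n s) (at s)"
    using less assms by (simp add: ramp_def power_0_left)
  then show ?thesis
    by (rule has_field_derivative_transform_within_open[of _ _ _ "{..<0}"])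
       (use less in \<open>auto simp: ramp_def\<close>)
next
  case equal
  have "isCont (\<lambda>y::real. max 0 y ^ n / fact (Suc n)) 0"
    by (intro continuous_intros) simp
  then have "((\<lambda>y::real. max 0 y ^ n / fact (Suc n)) \<longlongrightarrow> ramp n 0) (at 0)"
    using assms by (simp add: isCont_def ramp_def power_0_left)
  then have "((\<lambda>y. (ramp (Suc n) y - ramp (Suc n) 0) / (y - 0)) \<longlongrightarrow> ramp n 0) (at 0)"
    by (rule Lim_transform_within[where d=1])
       (use assms in \<open>auto simp: ramp_def max_def power_eq_if\<close>)
  then show ?thesis
    using equal by (simp add: has_field_derivative_iff)
next
  case greater
  have "((\<lambda>y. y ^ Suc n / fact (Suc n)) has_real_derivative ramp n s) (at s)"
    using DERIV_cdivide[OF DERIV_pow[of "Suc n" s UNIV], of "fact (Suc n)"] greater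
    by (simp add: ramp_def)
  then show ?thesis
    by (rule has_field_derivative_transform_within_open[of _ _ _ "{0<..}"])
       (use greater in \<open>auto simp: ramp_def\<close>)
qed

lemma ramp_chain [derivative_intros]:
  "0 < n \<Longrightarrow> (g has_real_derivative g') (at s) \<Longrightarrow>
   ((\<lambda>s. ramp (Suc n) (g s)) has_real_derivative ramp n (g s) * g') (at s)"
  using DERIV_chain2[OF ramp_has_real_derivative] by blast

lemma continuous_on_ramp [continuous_intros]:
  "continuous_on S g \<Longrightarrow> continuous_on S (\<lambda>s. ramp n (g s))"
  unfolding ramp_def by (auto intro!: continuous_intros)

lemma ramp_eq_0: "s \<le> 0 \<Longrightarrow> ramp (Suc n) s = 0"
  by (simp add: ramp_def)

text \<open>\<open>trap 0 a b c d\<close> is the trapezoid rising on \<open>[a, b]\<close>, equal to 1 on \<open>[b, c]\<close> and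
  falling on \<open>[c, d]\<close>; \<open>trap n\<close> is its \<open>n\<close>-fold primitive vanishing on \<open>]-\<infinity>, a]\<close>.\<close>

definition trap :: "nat \<Rightarrow> real \<Rightarrow> real \<Rightarrow> real \<Rightarrow> real \<Rightarrow> real \<Rightarrow> real" where
  "trap n a b c d s =
     (ramp (Suc n) (s - a) - ramp (Suc n) (s - b)) / (b - a)
   - (ramp (Suc n) (s - c) - ramp (Suc n) (s - d)) / (d - c)"

lemma trap_eq_0_left: "a \<le> b \<Longrightarrow> a \<le> c \<Longrightarrow> a \<le> d \<Longrightarrow> s \<le> a \<Longrightarrow> trap n a b c d s = 0"
  by (simp add: trap_def ramp_eq_0)

context
  fixes a b c d :: real
  assumes abcd: "a < b" "b < c" "c < d"
begin
lemma trap_has_real_derivative: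
  "(trap (Suc n) a b c d has_real_derivative trap n a b c d s) (at s)"
  using abcd unfolding trap_def by (auto intro!: derivative_eq_intros)

lemma continuous_on_trap: "continuous_on S (trap n a b c d)"
  using abcd unfolding trap_def by (auto intro!: continuous_intros)


lemma trap_0_eq:
  "trap 0 a b c d s =
     (if s \<le> a then 0 else if s \<le> b then (s - a) / (b - a) else if s \<le> c then 1
      else if s \<le> d then (d - s) / (d - c) else 0)"
proof -
  have "b - a \<noteq> 0" "d - c \<noteq> 0" using abcd by auto
  then show ?thesis
    using abcd by (auto simp: trap_def ramp_def max_def divide_simps) (auto simp: algebra_simps)
qed

lemma trap_0_nonneg: "0 \<le> trap 0 a b c d s"
  using abcd by (auto simp: trap_0_eq)

lemma trap_0_le_1: "trap 0 a b c d s \<le> 1"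
  using abcd by (auto simp: trap_0_eq)

lemma trap_0_eq_1: "b \<le> s \<Longrightarrow> s \<le> c \<Longrightarrow> trap 0 a b c d s = 1"
  using abcd by (auto simp: trap_0_eq)

lemma trap_0_eq_0_right: "d \<le> s \<Longrightarrow> trap 0 a b c d s = 0"
  using abcd by (auto simp: trap_0_eq)

lemma trap_1_eq_area: "d \<le> s \<Longrightarrow> trap 1 a b c d s = (c + d - a - b) / 2"
proof -
  assume s: "d \<le> s"
  have "b - a \<noteq> 0" "d - c \<noteq> 0" using abcd by auto
  then show ?thesis
    using abcd s by (auto simp: trap_def ramp_def max_def divide_simps power2_eq_square)
                    (auto simp: algebra_simps)
qed

lemma trap_1_has_real_derivative: "(trap 1 a b c d has_real_derivative trap 0 a b c d s) (at s)"
  using trap_has_real_derivative[of 0] by simp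

lemma trap_1_mono: "s \<le> t \<Longrightarrow> trap 1 a b c d s \<le> trap 1 a b c d t"
  by (erule DERIV_nonneg_imp_nondecreasing[of s t "trap 1 a b c d"])
     (metis trap_1_has_real_derivative trap_0_nonneg)

lemma trap_1_nonneg: "0 \<le> trap 1 a b c d s"
  using trap_1_mono[of a s] trap_1_mono[of s a] trap_eq_0_left[of a b c d a 1] abcd
  by (cases "s \<le> a") (auto simp: trap_eq_0_left)

lemma trap_1_le_area: "trap 1 a b c d s \<le> (c + d - a - b) / 2"
  using trap_1_mono[of s "max s d"] trap_1_eq_area[of "max s d"] by auto

end

text \<open>The second derivative \<open>profile 0\<close> is the trapezoid followed, beyond \<open>d\<close>, by a
  negative copy compressed by the factor \<open>l\<close>; this copy has the same area, so the first
  derivative \<open>profile 1\<close> returns to 0 and \<open>profile 2\<close> becomes constant.\<close>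

definition profile :: "nat \<Rightarrow> real \<Rightarrow> real \<Rightarrow> real \<Rightarrow> real \<Rightarrow> real \<Rightarrow> real \<Rightarrow> real" where
  "profile n a b c d l s = trap n a b c d s - l * trap n a b c d (l * (s - d)) / l ^ n"

context
  fixes a b c d l :: real
  assumes abcd: "0 \<le> a" "a < b" "b < c" "c < d" and l: "0 < l"
begin

lemma profile_has_real_derivative:
  "(profile (Suc n) a b c d l has_real_derivative profile n a b c d l s) (at s)"
  unfolding profile_def using l
  by (auto intro!: derivative_eq_intros trap_has_real_derivative[OF abcd(2-)]
                   trap_has_real_derivative[OF abcd(2-), THEN DERIV_chain2])

lemma profile_1_has_real_derivative:
  "(profile 1 a b c d l has_real_derivative profile 0 a b c d l s) (at s)"
  using profile_has_real_derivative[of 0] by simp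

lemma profile_2_has_real_derivative:
  "(profile 2 a b c d l has_real_derivative profile 1 a b c d l s) (at s)"
  using profile_has_real_derivative[of 1] by (simp add: numeral_2_eq_2)

lemma continuous_on_profile: "continuous_on S (profile n a b c d l)"
proof -
  have "continuous_on S (\<lambda>s. trap n a b c d (l * (s - d)))"
    by (rule continuous_on_compose2[OF continuous_on_trap[OF abcd(2-)]])
       (auto intro!: continuous_intros)
  then show ?thesis
    unfolding profile_def using l by (auto intro!: continuous_intros continuous_on_trap[OF abcd(2-)])
qed

lemma profile_compressed_eq_0: "s \<le> d \<Longrightarrow> trap n a b c d (l * (s - d)) = 0"
  using abcd l mult_nonneg_nonpos[of l "s - d"] by (intro trap_eq_0_left) auto

lemma profile_flat_region:
  assumes "d + d / l \<le> s" shows "d \<le> s" "d \<le> l * (s - d)"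
proof -
  have "0 < d / l" using abcd l by simp
  then show "d \<le> s" using assms by linarith
  have "d = l * (d / l)" using l by simp
  also have "\<dots> \<le> l * (s - d)" using assms l by (intro mult_left_mono) auto
  finally show "d \<le> l * (s - d)" .
qed

lemma profile_0_eq_1: "b \<le> s \<Longrightarrow> s \<le> c \<Longrightarrow> profile 0 a b c d l s = 1"
  using abcd by (simp add: profile_def trap_0_eq_1 profile_compressed_eq_0)

lemma profile_0_eq_trap: "s \<le> d \<Longrightarrow> profile 0 a b c d l s = trap 0 a b c d s"
  by (simp add: profile_def profile_compressed_eq_0)

lemma profile_0_bound: "d \<le> s \<Longrightarrow> \<bar>profile 0 a b c d l s\<bar> \<le> l"
  using trap_0_nonneg[OF abcd(2-), of "l * (s - d)"] trap_0_le_1[OF abcd(2-), of "l * (s - d)"] l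
  by (simp add: profile_def trap_0_eq_0_right[OF abcd(2-)] mult_le_cancel_left1)

lemma profile_0_eq_0: "d + d / l \<le> s \<Longrightarrow> profile 0 a b c d l s = 0"
  using profile_flat_region[of s] by (simp add: profile_def trap_0_eq_0_right[OF abcd(2-)])

lemma profile_1_nonneg: "0 \<le> profile 1 a b c d l s"
proof (cases "s \<le> d")
  case True
  then show ?thesis
    using trap_1_nonneg[OF abcd(2-)] by (simp add: profile_def profile_compressed_eq_0)
next
  case False
  then show ?thesis
    using l trap_1_eq_area[OF abcd(2-), of s] trap_1_le_area[OF abcd(2-), of "l * (s - d)"]
    by (simp add: profile_def)
qed

lemma profile_1_le: "profile 1 a b c d l s \<le> d"
  using trap_1_le_area[OF abcd(2-), of s] trap_1_nonneg[OF abcd(2-), of "l * (s - d)"] abcd l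
  by (simp add: profile_def)

lemma profile_1_eq_0: "d + d / l \<le> s \<Longrightarrow> profile 1 a b c d l s = 0"
  using profile_flat_region[of s] l trap_1_eq_area[OF abcd(2-), of s]
    trap_1_eq_area[OF abcd(2-), of "l * (s - d)"]
  by (simp add: profile_def)

lemma profile_2_eq_0: "s \<le> a \<Longrightarrow> profile 2 a b c d l s = 0"
  using abcd by (simp add: profile_def profile_compressed_eq_0 trap_eq_0_left)

lemma profile_2_mono: "s \<le> t \<Longrightarrow> profile 2 a b c d l s \<le> profile 2 a b c d l t"
  by (erule DERIV_nonneg_imp_nondecreasing[of s t "profile 2 a b c d l"])
     (auto intro!: profile_2_has_real_derivative profile_1_nonneg)

lemma profile_2_nonneg: "0 \<le> profile 2 a b c d l s"
  using profile_2_mono[of a s] profile_2_mono[of s a] profile_2_eq_0[of a]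
  by (cases "s \<le> a") (auto simp: profile_2_eq_0)

lemma profile_2_const:
  assumes "d + d / l \<le> s" shows "profile 2 a b c d l s = profile 2 a b c d l (d + d / l)"
proof -
  have "(profile 2 a b c d l has_real_derivative 0) (at t within {d + d / l..})"
    if "t \<in> {d + d / l..}" for t
    using profile_2_has_real_derivative[of t] profile_1_eq_0[of t] that
    by (auto intro: has_field_derivative_at_within)
  then obtain k where "\<forall>t\<in>{d + d / l..}. profile 2 a b c d l t = k"
    using has_field_derivative_zero_constant[OF convex_real_interval(1)] by blast
  then show ?thesis using assms by simp
qed

lemma profile_2_le: "profile 2 a b c d l s \<le> d * (d + d / l)"
proof -
  let ?T = "d + d / l"
  have T: "0 \<le> ?T" using abcd l by simp
  have "(\<lambda>t. d * t - profile 2 a b c d l t) 0 \<le> (\<lambda>t. d * t - profile 2 a b c d l t) ?T"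
  proof (rule DERIV_nonneg_imp_nondecreasing[OF T], intro exI conjI)
    fix t
    show "((\<lambda>t. d * t - profile 2 a b c d l t) has_real_derivative d * 1 - profile 1 a b c d l t) (at t)"
      by (intro DERIV_diff DERIV_cmult DERIV_ident profile_2_has_real_derivative)
    show "0 \<le> d * 1 - profile 1 a b c d l t"
      using profile_1_le[of t] by simp
  qed
  then have "profile 2 a b c d l ?T \<le> d * ?T"
    using profile_2_eq_0[of 0] abcd by simp
  moreover have "profile 2 a b c d l s \<le> profile 2 a b c d l ?T"
    using profile_2_mono[of s ?T] profile_2_const[of s] by (cases "s \<le> ?T") auto
  ultimately show ?thesis by linarith
qed
    
end

lemma vertex_profile:
  fixes \<delta> \<epsilon> :: real
  assumes "0 < \<delta>" "\<delta> < \<epsilon>" "\<epsilon> < 1"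
  obtains a :: real and f F p :: "real \<Rightarrow> real" where
    "0 < a" "\<And>s. s \<le> a \<Longrightarrow> f s = 0"
    "\<And>s. (f has_real_derivative F s) (at s)" "\<And>s. (F has_real_derivative p s) (at s)"
    "continuous_on UNIV p"
    "\<And>s. 0 \<le> f s" "\<And>s. f s \<le> 2 * \<epsilon>" "\<And>s. 0 \<le> F s" "\<And>s. F s \<le> \<epsilon>"
    "\<And>s. \<epsilon> + sqrt \<epsilon> \<le> s \<Longrightarrow> f s = f (\<epsilon> + sqrt \<epsilon>) \<and> F s = 0 \<and> p s = 0"
    "\<And>s. \<delta> \<le> s \<Longrightarrow> s \<le> \<epsilon> / 2 \<Longrightarrow> p s = 1"
    "\<And>s. s < \<epsilon> \<Longrightarrow> 0 \<le> p s"
    "\<And>s. \<epsilon> \<le> s \<Longrightarrow> \<bar>p s\<bar> \<le> sqrt \<epsilon>"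
proof -
  define b where "b = min \<delta> (\<epsilon> / 4)"
  have abcd: "0 \<le> b / 2" "b / 2 < b" "b < \<epsilon> / 2" "\<epsilon> / 2 < \<epsilon>" and l: "0 < sqrt \<epsilon>"
    using assms by (auto simp: b_def)
  have T: "\<epsilon> + \<epsilon> / sqrt \<epsilon> = \<epsilon> + sqrt \<epsilon>"
    using assms by (simp add: real_div_sqrt)
  have "sqrt \<epsilon> < 1" using assms by simp
  then have "\<epsilon> * (\<epsilon> + sqrt \<epsilon>) \<le> \<epsilon> * 2"
    using assms by (intro mult_left_mono) (auto simp del: real_sqrt_lt_1_iff)
  then have f_le: "profile 2 (b / 2) b (\<epsilon> / 2) \<epsilon> (sqrt \<epsilon>) s \<le> 2 * \<epsilon>" for s
    using profile_2_le[OF abcd l, of s] T by (simp add: mult.commute)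
  let ?P = "\<lambda>n. profile n (b / 2) b (\<epsilon> / 2) \<epsilon> (sqrt \<epsilon>)"
  show thesis
  proof (rule that[of "b / 2" "?P 2" "?P 1" "?P 0"])
    show "0 < b / 2" using assms by (simp add: b_def)
    show "?P 2 s = 0" if "s \<le> b / 2" for s using profile_2_eq_0[OF abcd l that] .
    show "(?P 2 has_real_derivative ?P 1 s) (at s)" for s
      using profile_2_has_real_derivative[OF abcd l] .
    show "(?P 1 has_real_derivative ?P 0 s) (at s)" for s
      using profile_1_has_real_derivative[OF abcd l] .
    show "continuous_on UNIV (?P 0)" using continuous_on_profile[OF abcd l] .
    show "0 \<le> ?P 2 s" for s using profile_2_nonneg[OF abcd l] .
    show "?P 2 s \<le> 2 * \<epsilon>" for s using f_le .
    show "0 \<le> ?P 1 s" for s using profile_1_nonneg[OF abcd l] .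
    show "?P 1 s \<le> \<epsilon>" for s using profile_1_le[OF abcd l] .
    show "?P 2 s = ?P 2 (\<epsilon> + sqrt \<epsilon>) \<and> ?P 1 s = 0 \<and> ?P 0 s = 0" if "\<epsilon> + sqrt \<epsilon> \<le> s" for s
      using that profile_2_const[OF abcd l, of s] profile_1_eq_0[OF abcd l, of s]
        profile_0_eq_0[OF abcd l, of s]
      by (simp add: T)
    show "?P 0 s = 1" if "\<delta> \<le> s" "s \<le> \<epsilon> / 2" for s
      using that by (intro profile_0_eq_1[OF abcd l]) (auto simp: b_def)
    show "0 \<le> ?P 0 s" if "s < \<epsilon>" for s
      using that profile_0_eq_trap[OF abcd l] trap_0_nonneg[OF abcd(2-)] by simp
    show "\<bar>?P 0 s\<bar> \<le> sqrt \<epsilon>" if "\<epsilon> \<le> s" for s using profile_0_bound[OF abcd l that] .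
  qed
qed

section \<open>Partial derivatives of ridge functions\<close>

lemma pd_of_has_derivative: "(f has_derivative D) (at y) \<Longrightarrow> pd j f y = D (axis j 1)"
  unfolding pd_def using frechet_derivative_at by metis

lemma pd_uminus:
  assumes "f differentiable at y"
  shows "pd j (\<lambda>y. - f y) y = - pd j f y"
proof -
  obtain D where D: "(f has_derivative D) (at y)"
    using assms by (auto simp: differentiable_def)
  show ?thesis
    using pd_of_has_derivative[OF D] pd_of_has_derivative[OF has_derivative_minus[OF D]] by simp
qed

lemma grad_uminus: "f differentiable at y \<Longrightarrow> grad (\<lambda>y. - f y) y = - grad f y"
  by (simp add: grad_def pd_uminus vec_eq_iff)

lemma C2_on_uminus:
  assumes U: "open U" and f: "C2_on U f"
  shows "C2_on U (\<lambda>y. - f y)"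
proof -
  have pd_eq: "pd j (\<lambda>y. - f y) z = - pd j f z" if "z \<in> U" for j z
    using f that by (simp add: C2_on_def pd_uminus)
  have pd_diff: "pd j (\<lambda>y. - f y) differentiable at y" if y: "y \<in> U" for j y
  proof -
    obtain D where "(pd j f has_derivative D) (at y)"
      using f y unfolding C2_on_def differentiable_def by blast
    then have "(pd j (\<lambda>y. - f y) has_derivative (\<lambda>h. - D h)) (at y)"
      by (rule has_derivative_transform_within_open[OF has_derivative_minus U y])
         (simp add: pd_eq)
    then show ?thesis by (auto simp: differentiable_def)
  qed
  have pd2_eq: "pd2 i j (\<lambda>y. - f y) y = - pd2 i j f y" if "y \<in> U" for i j y
  proof -
    have "frechet_derivative (pd j (\<lambda>y. - f y)) (at y)
        = frechet_derivative (\<lambda>z. - pd j f z) (at y)"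
      by (rule frechet_derivative_transform_within_open[OF pd_diff[OF that] U that])
         (simp add: pd_eq)
    then have "pd i (pd j (\<lambda>y. - f y)) y = pd i (\<lambda>z. - pd j f z) y"
      unfolding pd_def[of i] by simp
    also have "\<dots> = - pd2 i j f y"
      using f that by (simp add: C2_on_def pd_uminus pd2_def)
    finally show ?thesis by (simp add: pd2_def)
  qed
  have "continuous_on U (pd2 i j (\<lambda>y. - f y))" for i j
    using f by (simp add: C2_on_def pd2_eq continuous_on_minus cong: continuous_on_cong)
  then show ?thesis
    using f pd_diff by (auto simp: C2_on_def)
qed

lemma C2c_plus_R_uminus:
  assumes "C2c_plus_R G f" shows "C2c_plus_R G (\<lambda>y. - f y)"
proof -
  obtain U k where "open U" "closure G \<subseteq> U" "C2_on U f"
    and "compact (closure {y \<in> closure G. f y \<noteq> k})"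
    using assms unfolding C2c_plus_R_def by blast
  then show ?thesis
    unfolding C2c_plus_R_def by (intro exI[of _ U] exI[of _ "- k"]) (simp add: C2_on_uminus)
qed

lemma ridge_has_derivative:
  fixes v x :: "real^'j::finite"
  assumes W: "open W" "y \<in> W" and g: "\<And>z. z \<in> W \<Longrightarrow> g z = \<phi> (v \<bullet> (z - x))"
    and \<phi>: "(\<phi> has_real_derivative \<phi>') (at (v \<bullet> (y - x)))"
  shows "(g has_derivative (\<lambda>z. \<phi>' * (v \<bullet> z))) (at y)"
proof -
  have "((\<lambda>z. v \<bullet> (z - x)) has_derivative (\<lambda>z. v \<bullet> z)) (at y)"
    by (auto intro!: derivative_eq_intros)
  from has_derivative_compose[OF this \<phi>[THEN has_field_derivative_imp_has_derivative]]
  have "((\<lambda>z. \<phi> (v \<bullet> (z - x))) has_derivative (\<lambda>z. \<phi>' * (v \<bullet> z))) (at y)"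
    by simp
  then show ?thesis
    by (rule has_derivative_transform_within_open[OF _ W]) (simp add: g)
qed

lemma C2_on_ridge_patch:
  fixes g :: "real^'j::finite \<Rightarrow> real" and v x :: "real^'j"
  assumes W: "open W1" "open W2"
    and f: "\<And>s. (f has_real_derivative f1 s) (at s)" "\<And>s. (f1 has_real_derivative f2 s) (at s)"
    and f2: "continuous_on UNIV f2"
    and g1: "\<And>y. y \<in> W1 \<Longrightarrow> g y = f (v \<bullet> (y - x))"
    and g2: "\<And>y. y \<in> W2 \<Longrightarrow> g y = k"
  shows "C2_on (W1 \<union> W2) g"
    and "\<And>y j. y \<in> W1 \<Longrightarrow> pd j g y = f1 (v \<bullet> (y - x)) * v $ j"
    and "\<And>y i j. y \<in> W1 \<Longrightarrow> pd2 i j g y = f2 (v \<bullet> (y - x)) * v $ i * v $ j"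
    and "\<And>y j. y \<in> W2 \<Longrightarrow> pd j g y = 0"
    and "\<And>y i j. y \<in> W2 \<Longrightarrow> pd2 i j g y = 0"
proof -
  have D1: "(g has_derivative (\<lambda>z. f1 (v \<bullet> (y - x)) * (v \<bullet> z))) (at y)" if "y \<in> W1" for y
    using ridge_has_derivative[OF W(1) that g1 f(1)] .
  have D2: "(g has_derivative (\<lambda>z. 0 * (v \<bullet> z))) (at y)" if "y \<in> W2" for y
    using ridge_has_derivative[of W2 y g "\<lambda>_. k" v x 0] W(2) that g2 by simp
  show pd1: "pd j g y = f1 (v \<bullet> (y - x)) * v $ j" if "y \<in> W1" for y j
    using pd_of_has_derivative[OF D1[OF that]] by (simp add: inner_axis)
  show pd2: "pd j g y = 0" if "y \<in> W2" for y j
    using pd_of_has_derivative[OF D2[OF that]] by simp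
  have E1: "(pd j g has_derivative (\<lambda>z. (f2 (v \<bullet> (y - x)) * v $ j) * (v \<bullet> z))) (at y)"
    if "y \<in> W1" for y j
    using ridge_has_derivative[OF W(1) that, of "pd j g" "\<lambda>s. f1 s * v $ j" v x,
                               OF pd1 DERIV_cmult_right[OF f(2)]] .
  have E2: "(pd j g has_derivative (\<lambda>z. 0 * (v \<bullet> z))) (at y)" if "y \<in> W2" for y j
    using ridge_has_derivative[OF W(2) that, of "pd j g" "\<lambda>_. 0" v x 0] pd2 by simp
  show Q1: "pd2 i j g y = f2 (v \<bullet> (y - x)) * v $ i * v $ j" if "y \<in> W1" for y i j
    using pd_of_has_derivative[OF E1[OF that]] by (simp add: inner_axis pd2_def)
  show Q2: "pd2 i j g y = 0" if "y \<in> W2" for y i j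
    using pd_of_has_derivative[OF E2[OF that]] by (simp add: pd2_def)
  have "continuous_on W1 (\<lambda>y. f2 (v \<bullet> (y - x)))"
    by (rule continuous_on_compose2[OF f2]) (auto intro!: continuous_intros)
  then have "continuous_on W1 (pd2 i j g)" for i j
    by (auto simp: Q1 intro!: continuous_intros cong: continuous_on_cong)
  moreover have "continuous_on W2 (pd2 i j g)" for i j
    by (simp add: Q2 cong: continuous_on_cong)
  ultimately show "C2_on (W1 \<union> W2) g"
    using D1 D2 E1 E2 continuous_on_open_Un[OF W] unfolding C2_on_def differentiable_def by blast
qed

lemma sum_matrix_outer_product:
  fixes A :: "real^'j::finite^'j"
  shows "(\<Sum>i\<in>UNIV. \<Sum>j\<in>UNIV. A $ i $ j * (q * v $ i * v $ j)) = q * (v \<bullet> (A *v v))"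
  unfolding matrix_vector_mult_def inner_vec_def
  by (simp add: sum_distrib_left mult_ac)

section \<open>The barrier at a vertex\<close>

locale vertex_ridge =
  fixes G :: "(real^'j::finite) set" and d :: "real^'j \<Rightarrow> (real^'j) set"
    and V :: "(real^'j) set" and x v :: "real^'j" and \<alpha> r r1 T a :: real
    and f F p :: "real \<Rightarrow> real"
  assumes f_deriv: "\<And>s. (f has_real_derivative F s) (at s)"
    and F_deriv: "\<And>s. (F has_real_derivative p s) (at s)"
    and p_cont: "continuous_on UNIV p"
    and F_nonneg: "\<And>s. 0 \<le> F s"
    and a_pos: "0 < a" and f_vanishes: "\<And>s. s \<le> a \<Longrightarrow> f s = 0"
    and flat: "\<And>s. T \<le> s \<Longrightarrow> f s = f T \<and> F s = 0 \<and> p s = 0"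
    and cone: "\<And>y. y \<in> closure G \<inter> cball x r \<Longrightarrow>
                 \<alpha> * norm (y - x) \<le> v \<bullet> (y - x) \<and> (\<forall>e\<in>d y. 0 \<le> v \<bullet> e)"
    and radii: "0 < \<alpha>" "0 < r1" "r1 < r" "T < \<alpha> * r1"
    and vertices_apart: "\<And>z. z \<in> V - {x} \<Longrightarrow> T < \<alpha> * dist z x"
    and V_closure: "V \<subseteq> closure G"
begin

text \<open>On \<open>closure G\<close> the cut-off at radius \<open>r1\<close> is invisible: wherever \<open>r1 \<le> dist x y \<le> r\<close>
  the cone condition gives \<open>v \<bullet> (y - x) \<ge> \<alpha> r1 > T\<close>, where \<open>f\<close> is already flat.\<close>

definition g :: "real^'j \<Rightarrow> real" where
  "g y = (if dist x y < r1 then f (v \<bullet> (y - x)) else f T)"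

definition ridge_zone :: "(real^'j) set" where
  "ridge_zone = ball x r1 \<union> {y. T < v \<bullet> (y - x)}"

definition flat_zone :: "(real^'j) set" where
  "flat_zone = {y. r1 < dist x y}"

lemma open_ridge_zone: "open ridge_zone"
  unfolding ridge_zone_def by (intro open_Un open_ball open_Collect_less continuous_intros)

lemma open_flat_zone: "open flat_zone"
  unfolding flat_zone_def by (intro open_Collect_less continuous_intros)

lemma g_ridge: "y \<in> ridge_zone \<Longrightarrow> g y = f (v \<bullet> (y - x))"
  using flat[of "v \<bullet> (y - x)"] by (auto simp: g_def ridge_zone_def dist_commute)

lemma g_flat: "y \<in> flat_zone \<Longrightarrow> g y = f T"
  by (simp add: g_def flat_zone_def)

lemma g_range: "g y \<in> range f"
  by (simp add: g_def)

lemma height_beyond_cutoff: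
  assumes "y \<in> closure G" "r1 \<le> dist x y" "dist x y \<le> r"
  shows "T < v \<bullet> (y - x)"
proof -
  have "T < \<alpha> * r1" using radii by simp
  also have "\<dots> \<le> \<alpha> * norm (y - x)"
    using assms radii by (intro mult_left_mono) (auto simp: dist_norm norm_minus_commute)
  also have "\<dots> \<le> v \<bullet> (y - x)" using cone assms by auto
  finally show ?thesis .
qed

lemma closure_subset_zones: "closure G \<subseteq> ridge_zone \<union> flat_zone"
proof
  fix y assume "y \<in> closure G"
  then show "y \<in> ridge_zone \<union> flat_zone"
    using height_beyond_cutoff[of y] radii
    by (cases "dist x y" r1 rule: linorder_cases) (auto simp: ridge_zone_def flat_zone_def)
qed

lemmas g_patch = C2_on_ridge_patch[where g = g and v = v and x = x and k = "f T",
                      OF open_ridge_zone open_flat_zone f_deriv F_deriv p_cont g_ridge g_flat,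
                      simplified]

lemma C2c_plus_R_g: "C2c_plus_R G g"
  unfolding C2c_plus_R_def
proof (intro exI[of _ "ridge_zone \<union> flat_zone"] exI[of _ "f T"] conjI)
  show "open (ridge_zone \<union> flat_zone)" using open_ridge_zone open_flat_zone by blast
  have "{y \<in> closure G. g y \<noteq> f T} \<subseteq> cball x r1"
    by (auto simp: g_def split: if_splits)
  then show "compact (closure {y \<in> closure G. g y \<noteq> f T})"
    using bounded_cball bounded_subset compact_closure by blast
qed (use closure_subset_zones g_patch(1) in auto)

lemma grad_g:
  assumes "y \<in> closure G"
  shows "grad g y = (if dist x y \<le> r then F (v \<bullet> (y - x)) else 0) *\<^sub>R v"
proof (cases "y \<in> ridge_zone")
  case True
  have "dist x y \<le> r" if "F (v \<bullet> (y - x)) \<noteq> 0"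
    using True that flat[of "v \<bullet> (y - x)"] radii by (auto simp: ridge_zone_def)
  then show ?thesis
    using g_patch(2)[OF True] by (auto simp: grad_def vec_eq_iff)
next
  case False
  then have "y \<in> flat_zone" using assms closure_subset_zones by auto
  moreover have "F (v \<bullet> (y - x)) = 0" if "dist x y \<le> r"
    using flat[of "v \<bullet> (y - x)"] height_beyond_cutoff[OF assms _ that] False
    by (auto simp: ridge_zone_def)
  ultimately show ?thesis
    using g_patch(4) by (auto simp: grad_def vec_eq_iff)
qed

lemma pd2_g:
  assumes "y \<in> closure G \<inter> cball x r"
  shows "pd2 i j g y = p (v \<bullet> (y - x)) * v $ i * v $ j"
proof (cases "y \<in> ridge_zone")
  case True
  then show ?thesis using g_patch(3) by simp
next
  case False
  then have "y \<in> flat_zone" using assms closure_subset_zones by auto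
  moreover have "p (v \<bullet> (y - x)) = 0"
    using flat[of "v \<bullet> (y - x)"] height_beyond_cutoff[of y] assms False
    by (auto simp: ridge_zone_def)
  ultimately show ?thesis using g_patch(5) by simp
qed

lemma g_locally_constant_at_vertices:
  assumes "z \<in> V"
  shows "\<exists>U. open U \<and> z \<in> U \<and> (\<forall>y\<in>U \<inter> closure G. g y = g z)"
proof (cases "z = x")
  case True
  let ?U = "ball x r1 \<inter> {y. v \<bullet> (y - x) < a}"
  have "open ?U" by (intro open_Int open_ball open_Collect_less continuous_intros)
  moreover have "\<forall>y\<in>?U. g y = 0" using f_vanishes by (auto simp: g_def dist_commute)
  ultimately show ?thesis
    using True radii a_pos by (intro exI[of _ ?U]) auto
next
  case False
  let ?U = "flat_zone \<union> {y. T < v \<bullet> (y - x)}"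
  have "open ?U" using open_flat_zone by (intro open_Un open_Collect_less continuous_intros)
  moreover have "g y = f T" if "y \<in> ?U" for y
    using that flat[of "v \<bullet> (y - x)"] by (auto simp: g_def flat_zone_def)
  moreover have "z \<in> ?U"
  proof (cases "r1 < dist x z")
    case False
    have "T < \<alpha> * norm (z - x)" using vertices_apart[of z] \<open>z \<noteq> x\<close> assms by (simp add: dist_norm)
    also have "\<dots> \<le> v \<bullet> (z - x)"
      using cone[of z] assms V_closure False radii by (auto simp: dist_commute)
    finally show ?thesis by simp
  qed (simp add: flat_zone_def)
  ultimately show ?thesis by (intro exI[of _ ?U]) auto
qed

lemma testH_minus_g: "testH G d V (\<lambda>y. - g y)"
  unfolding testH_def
proof (intro conjI ballI)
  show "C2c_plus_R G (\<lambda>y. - g y)" using C2c_plus_R_uminus[OF C2c_plus_R_g] .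
  show "\<exists>U. open U \<and> z \<in> U \<and> (\<forall>y\<in>U \<inter> closure G. - g y = - g z)" if "z \<in> V" for z
    using g_locally_constant_at_vertices[OF that] by auto
  fix y e assume y: "y \<in> frontier G" and e: "e \<in> d y"
  have yG: "y \<in> closure G" using y by (simp add: frontier_def)
  then have "g differentiable at y"
    using g_patch(1) closure_subset_zones by (auto simp: C2_on_def)
  then have "e \<bullet> grad (\<lambda>y. - g y) y = - ((if dist x y \<le> r then F (v \<bullet> (y - x)) else 0) * (v \<bullet> e))"
    using grad_g[OF yG] by (simp add: grad_uminus inner_commute)
  also have "\<dots> \<le> 0"
    using cone[of y] yG e F_nonneg by (auto simp: dist_commute)
  finally show "e \<bullet> grad (\<lambda>y. - g y) y \<le> 0" .
qed

lemma hessian_trace_g: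
  assumes "y \<in> closure G \<inter> cball x r"
  shows "(\<Sum>i\<in>UNIV. \<Sum>j\<in>UNIV. diffm sg y $ i $ j * pd2 i j g y)
       = p (v \<bullet> (y - x)) * (v \<bullet> (diffm sg y *v v))"
  using pd2_g[OF assms] by (simp add: sum_matrix_outer_product)

end

lemma continuous_on_quadratic_form_diffm:
  fixes sg :: "real^'j::finite \<Rightarrow> real^'n::finite^'j"
  assumes "continuous_on UNIV sg"
  shows "continuous_on S (\<lambda>y. v \<bullet> (diffm sg y *v v))"
proof -
  have entries: "continuous_on S (\<lambda>y. sg y $ i $ k)" for i k
    by (intro continuous_on_component continuous_on_subset[OF assms]) auto
  show ?thesis
    unfolding diffm_def matrix_matrix_mult_def matrix_vector_mult_def transpose_def inner_vec_def
    by (simp, intro continuous_intros entries)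
qed

definition vertex_barrier ::
  "(real^'j::finite) set \<Rightarrow> (real^'j \<Rightarrow> (real^'j) set) \<Rightarrow> (real^'j) set \<Rightarrow> (real^'j \<Rightarrow> real^'j)
   \<Rightarrow> (real^'j \<Rightarrow> real^'n::finite^'j) \<Rightarrow> real^'j \<Rightarrow> real^'j \<Rightarrow> real \<Rightarrow> real \<Rightarrow> real \<Rightarrow> real
   \<Rightarrow> real \<Rightarrow> (real^'j \<Rightarrow> real) \<Rightarrow> bool" where
  "vertex_barrier G d V b sg x v r c C \<epsilon> \<delta> g \<longleftrightarrow>
          C2c_plus_R G g \<and> testH G d V (\<lambda>y. - g y)
        \<and> (\<forall>y\<in>closure G. g y \<ge> 0)
        \<and> (\<forall>y\<in>closure G. g y \<le> C * \<epsilon>)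
        \<and> (\<forall>y\<in>closure G. norm (grad g y) \<le> C * sqrt \<epsilon>)
        \<and> (\<forall>y\<in>closure G. \<bar>b y \<bullet> grad g y\<bar> \<le> C * sqrt \<epsilon>)
        \<and> (\<forall>y\<in>closure G \<inter> cball x r.
             let h = v \<bullet> (y - x);
                 L = (\<Sum>i\<in>UNIV. \<Sum>j\<in>UNIV. diffm sg y $ i $ j * pd2 i j g y)
             in (\<delta> + 2 * sqrt \<delta> < h \<and> h < \<epsilon> / 2 \<longrightarrow> L \<ge> c)
              \<and> (h \<ge> \<epsilon> \<longrightarrow> \<bar>L\<bar> \<le> C * sqrt \<epsilon>)
              \<and> (\<not> (\<delta> + 2 * sqrt \<delta> < h \<and> h < \<epsilon> / 2) \<and> \<not> (h \<ge> \<epsilon>) \<longrightarrow> L \<ge> 0))"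

lemma real_le_sqrt_self: "0 \<le> x \<Longrightarrow> x \<le> 1 \<Longrightarrow> x \<le> sqrt x"
  by (intro real_le_rsqrt) (simp add: power2_eq_square mult_left_le)

locale vertex_barrier_setting = vertex_ridge G d V x v \<alpha> r r1 "\<epsilon> + sqrt \<epsilon>" a f F p
  for G :: "(real^'j::finite) set" and d V x v \<alpha> r r1 \<epsilon> a f F p +
  fixes \<delta> B M :: real and b :: "real^'j \<Rightarrow> real^'j" and sg :: "real^'j \<Rightarrow> real^'n::finite^'j"
  assumes unit: "norm v = 1"
    and \<epsilon>: "0 < \<delta>" "\<delta> < \<epsilon>" "\<epsilon> < 1"
    and f_bounds: "\<And>s. 0 \<le> f s" "\<And>s. f s \<le> 2 * \<epsilon>"
    and F_le: "\<And>s. F s \<le> \<epsilon>"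
    and p_plateau: "\<And>s. \<delta> \<le> s \<Longrightarrow> s \<le> \<epsilon> / 2 \<Longrightarrow> p s = 1"
    and p_nonneg: "\<And>s. s < \<epsilon> \<Longrightarrow> 0 \<le> p s"
    and p_small: "\<And>s. \<epsilon> \<le> s \<Longrightarrow> \<bar>p s\<bar> \<le> sqrt \<epsilon>"
    and elliptic: "\<And>y. y \<in> closure G \<inter> cball x r \<Longrightarrow> \<alpha> \<le> v \<bullet> (diffm sg y *v v)"
    and B: "0 \<le> B" "\<And>y. y \<in> cball x r \<Longrightarrow> norm (b y) \<le> B"
    and M: "0 \<le> M" "\<And>y. y \<in> cball x r \<Longrightarrow> \<bar>v \<bullet> (diffm sg y *v v)\<bar> \<le> M"
begin

lemma sqrt_bounds: "\<epsilon> \<le> sqrt \<epsilon>" "sqrt \<epsilon> \<le> (2 + B + M) * sqrt \<epsilon>"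
  using \<epsilon> B M mult_right_mono[of 1 "2 + B + M" "sqrt \<epsilon>"] by (auto intro: real_le_sqrt_self)

lemma g_bounds: "0 \<le> g y" "g y \<le> (2 + B + M) * \<epsilon>"
proof -
  obtain s where "g y = f s" using g_range[of y] by blast
  moreover have "2 * \<epsilon> \<le> (2 + B + M) * \<epsilon>" using B M \<epsilon> by (intro mult_right_mono) auto
  ultimately show "0 \<le> g y" "g y \<le> (2 + B + M) * \<epsilon>" using f_bounds[of s] by auto
qed

lemma grad_g_bounds:
  assumes "y \<in> closure G"
  shows "norm (grad g y) \<le> (2 + B + M) * sqrt \<epsilon> \<and> \<bar>b y \<bullet> grad g y\<bar> \<le> (2 + B + M) * sqrt \<epsilon>"
proof (cases "dist x y \<le> r")
  case True
  let ?t = "F (v \<bullet> (y - x))"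
  have t: "0 \<le> ?t" "?t \<le> sqrt \<epsilon>" using F_nonneg F_le[of "v \<bullet> (y - x)"] sqrt_bounds by auto
  have "\<bar>b y \<bullet> v\<bar> \<le> B" using Cauchy_Schwarz_ineq2[of "b y" v] unit B(2)[of y] True by simp
  then have "?t * \<bar>b y \<bullet> v\<bar> \<le> sqrt \<epsilon> * B"
    using t B(1) \<epsilon> by (intro mult_mono) auto
  also have "\<dots> \<le> (2 + B + M) * sqrt \<epsilon>"
    using B M \<epsilon> mult_right_mono[of B "2 + B + M" "sqrt \<epsilon>"] by (simp add: mult.commute)
  finally show ?thesis
    using grad_g[OF assms] True t unit sqrt_bounds by (simp add: abs_mult)
next
  case False
  then show ?thesis using grad_g[OF assms] B M \<epsilon> by simp
qed

lemma hessian_g_bounds: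
  assumes y: "y \<in> closure G \<inter> cball x r"
  shows "let h = v \<bullet> (y - x);
             L = (\<Sum>i\<in>UNIV. \<Sum>j\<in>UNIV. diffm sg y $ i $ j * pd2 i j g y)
         in (\<delta> + 2 * sqrt \<delta> < h \<and> h < \<epsilon> / 2 \<longrightarrow> L \<ge> \<alpha>)
          \<and> (h \<ge> \<epsilon> \<longrightarrow> \<bar>L\<bar> \<le> (2 + B + M) * sqrt \<epsilon>)
          \<and> (\<not> (\<delta> + 2 * sqrt \<delta> < h \<and> h < \<epsilon> / 2) \<and> \<not> (h \<ge> \<epsilon>) \<longrightarrow> L \<ge> 0)"
proof -
  define h where "h = v \<bullet> (y - x)"
  define A where "A = v \<bullet> (diffm sg y *v v)"
  have A: "\<alpha> \<le> A" "\<bar>A\<bar> \<le> M" using elliptic[OF y] M(2)[of y] y by (auto simp: A_def)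
  have "0 \<le> sqrt \<delta>" using \<epsilon> by simp
  then have "\<delta> + 2 * sqrt \<delta> < h \<Longrightarrow> h < \<epsilon> / 2 \<Longrightarrow> p h = 1" using p_plateau[of h] by linarith
  moreover have "\<bar>p h * A\<bar> \<le> (2 + B + M) * sqrt \<epsilon>" if "\<epsilon> \<le> h"
  proof -
    have "\<bar>p h * A\<bar> \<le> sqrt \<epsilon> * M"
      unfolding abs_mult using p_small[OF that] A \<epsilon> by (intro mult_mono) auto
    also have "\<dots> \<le> (2 + B + M) * sqrt \<epsilon>"
      using B M \<epsilon> mult_right_mono[of M "2 + B + M" "sqrt \<epsilon>"] by (simp add: mult.commute)
    finally show ?thesis .
  qed
  moreover have "h < \<epsilon> \<Longrightarrow> 0 \<le> p h * A" using p_nonneg[of h] A radii by simp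
  moreover have "(\<Sum>i\<in>UNIV. \<Sum>j\<in>UNIV. diffm sg y $ i $ j * pd2 i j g y) = p h * A"
    using hessian_trace_g[OF y] by (simp add: h_def A_def)
  ultimately show ?thesis
    unfolding Let_def h_def[symmetric] using A by auto
qed

lemma vertex_barrier_g: "vertex_barrier G d V b sg x v r \<alpha> (2 + B + M) \<epsilon> \<delta> g"
  unfolding vertex_barrier_def
  using C2c_plus_R_g testH_minus_g g_bounds grad_g_bounds hessian_g_bounds by blast

end

lemma vertex_barrier_exists:
  fixes sg :: "real^'j::finite \<Rightarrow> real^'n::finite^'j"
  assumes AX: "assmV_at G d sg x v \<alpha> r" and V: "V \<subseteq> closure G"
    and \<rho>: "\<rho> \<le> r / 2" "\<And>z. z \<in> V - {x} \<Longrightarrow> \<rho> \<le> dist z x"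
    and B: "0 \<le> B" "\<And>y. y \<in> cball x r \<Longrightarrow> norm (b y) \<le> B"
    and M: "0 \<le> M" "\<And>y. y \<in> cball x r \<Longrightarrow> \<bar>v \<bullet> (diffm sg y *v v)\<bar> \<le> M"
    and \<epsilon>: "0 < \<delta>" "\<delta> < \<epsilon>" "\<epsilon> < 1" "\<epsilon> + sqrt \<epsilon> < \<alpha> * \<rho>"
  shows "\<exists>g. vertex_barrier G d V b sg x v r \<alpha> (2 + B + M) \<epsilon> \<delta> g"
proof -
  obtain a f F p where "0 < a" "\<And>s. s \<le> a \<Longrightarrow> f s = 0"
    "\<And>s. (f has_real_derivative F s) (at s)" "\<And>s. (F has_real_derivative p s) (at s)"
    "continuous_on UNIV p" "\<And>s. 0 \<le> f s" "\<And>s. f s \<le> 2 * \<epsilon>" "\<And>s. 0 \<le> F s" "\<And>s. F s \<le> \<epsilon>"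
    "\<And>s. \<epsilon> + sqrt \<epsilon> \<le> s \<Longrightarrow> f s = f (\<epsilon> + sqrt \<epsilon>) \<and> F s = 0 \<and> p s = 0"
    "\<And>s. \<delta> \<le> s \<Longrightarrow> s \<le> \<epsilon> / 2 \<Longrightarrow> p s = 1" "\<And>s. s < \<epsilon> \<Longrightarrow> 0 \<le> p s"
    "\<And>s. \<epsilon> \<le> s \<Longrightarrow> \<bar>p s\<bar> \<le> sqrt \<epsilon>"
    by (rule vertex_profile[OF \<epsilon>(1-3)]) (rule that)
  moreover have "0 < \<alpha>" "0 < r / 2" "r / 2 < r" "norm v = 1"
    and "\<And>y. y \<in> closure G \<inter> cball x r \<Longrightarrow> \<alpha> * norm (y - x) \<le> v \<bullet> (y - x)
           \<and> \<alpha> \<le> v \<bullet> (diffm sg y *v v) \<and> (\<forall>e\<in>d y. 0 \<le> v \<bullet> e)"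
    using AX by (auto simp: assmV_at_def dist_norm norm_minus_commute)
  moreover have "\<alpha> * \<rho> \<le> \<alpha> * (r / 2)" "\<And>z. z \<in> V - {x} \<Longrightarrow> \<alpha> * \<rho> \<le> \<alpha> * dist z x"
    using \<rho> \<open>0 < \<alpha>\<close> by (auto intro: mult_left_mono)
  then have "\<epsilon> + sqrt \<epsilon> < \<alpha> * (r / 2)" "\<And>z. z \<in> V - {x} \<Longrightarrow> \<epsilon> + sqrt \<epsilon> < \<alpha> * dist z x"
    using \<epsilon>(4) by fastforce+
  ultimately interpret vertex_barrier_setting G d V x v \<alpha> r "r / 2" \<epsilon> a f F p \<delta> B M b sg
    by unfold_locales (use V B M \<epsilon> in blast)+
  show ?thesis using vertex_barrier_g by blast
qed

lemma add_sqrt_less: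
  fixes k \<epsilon> :: real
  assumes "0 < k" "0 < \<epsilon>" "\<epsilon> < min 1 ((k / 2)\<^sup>2)"
  shows "\<epsilon> + sqrt \<epsilon> < k"
proof -
  have "sqrt \<epsilon> < sqrt ((k / 2)\<^sup>2)" using assms by (simp only: real_sqrt_less_iff)
  then have "sqrt \<epsilon> < k / 2" using assms by simp
  moreover have "\<epsilon> \<le> sqrt \<epsilon>" using assms by (intro real_le_sqrt_self) auto
  ultimately show ?thesis by linarith
qed

lemma vertex_barrier_family:
  fixes sg :: "real^'j::finite \<Rightarrow> real^'n::finite^'j"
  assumes AX: "assmV_at G d sg x v \<alpha> r" and V: "finite V" "V \<subseteq> closure G"
    and b: "continuous_on UNIV b" and sg: "continuous_on UNIV sg"
  shows "\<exists>c>0. \<exists>C>0. \<exists>\<epsilon>0>0. \<forall>\<epsilon>. 0 < \<epsilon> \<and> \<epsilon> < \<epsilon>0 \<longrightarrow> (\<forall>\<delta>. 0 < \<delta> \<and> \<delta> < \<epsilon> \<longrightarrow>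
           (\<exists>g. vertex_barrier G d V b sg x v r c C \<epsilon> \<delta> g))"
proof -
  have \<alpha>: "0 < \<alpha>" and r: "0 < r" using AX by (auto simp: assmV_at_def)
  obtain B where B: "0 \<le> B" "\<And>y. y \<in> cball x r \<Longrightarrow> norm (b y) \<le> B"
    using continuous_on_compact_bound[OF compact_cball continuous_on_subset[OF b subset_UNIV]]
    by blast
  obtain M where M: "0 \<le> M" "\<And>y. y \<in> cball x r \<Longrightarrow> \<bar>v \<bullet> (diffm sg y *v v)\<bar> \<le> M"
    using continuous_on_compact_bound[OF compact_cball continuous_on_quadratic_form_diffm[OF sg]]
    by (metis real_norm_def)
  define \<rho> where "\<rho> = Min (insert (r / 2) ((\<lambda>z. dist z x) ` (V - {x})))"
  have fin: "finite (insert (r / 2) ((\<lambda>z. dist z x) ` (V - {x})))" using V by simp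
  have \<rho>_le: "\<rho> \<le> t" if "t \<in> insert (r / 2) ((\<lambda>z. dist z x) ` (V - {x}))" for t
    unfolding \<rho>_def by (rule Min_le[OF fin that])
  have "0 < \<rho>" using fin r by (auto simp: \<rho>_def)
  then have \<rho>: "0 < \<rho>" "\<rho> \<le> r / 2" "\<And>z. z \<in> V - {x} \<Longrightarrow> \<rho> \<le> dist z x"
    using \<rho>_le by blast+
  have "\<exists>g. vertex_barrier G d V b sg x v r \<alpha> (2 + B + M) \<epsilon> \<delta> g"
    if "0 < \<epsilon>" "\<epsilon> < min 1 ((\<alpha> * \<rho> / 2)\<^sup>2)" "0 < \<delta>" "\<delta> < \<epsilon>" for \<epsilon> \<delta>
    using vertex_barrier_exists[OF AX V(2) \<rho>(2,3) B M] that add_sqrt_less[of "\<alpha> * \<rho>" \<epsilon>] \<alpha> \<rho>(1)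
    by auto
  moreover have "0 < min 1 ((\<alpha> * \<rho> / 2)\<^sup>2)" "0 < 2 + B + M" using \<alpha> \<rho> B M by auto
  ultimately show ?thesis using \<alpha> by blast
qed

theorem lemma5p13:
  fixes G :: "(real^'j) set"
    and d :: "real^'j \<Rightarrow> (real^'j) set"
    and V :: "(real^'j) set"
    and b :: "real^'j \<Rightarrow> real^'j"
    and sg :: "real^'j \<Rightarrow> real^'n^'j"
  assumes G_open: "open G" and G_conn: "connected G" and G_ne: "G \<noteq> {}"
    and d_bdry: "\<forall>x\<in>frontier G. closed (d x) \<and> convex_cone (d x)"
    and d_int: "\<forall>x\<in>G. d x = {0}"
    and d_graph: "closed {(x, e). x \<in> closure G \<and> e \<in> d x}"
    and V_sub: "V \<subseteq> frontier G"
    and b_cont: "continuous_on UNIV b"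
    and sigma_cont: "continuous_on UNIV sg"
    and AV: "assmV G d sg V"
  shows "\<forall>x\<in>V. \<forall>v \<alpha> r. assmV_at G d sg x v \<alpha> r \<longrightarrow>
     (\<exists>c>0. \<exists>C>0. \<exists>\<epsilon>0>0. \<forall>\<epsilon>. 0 < \<epsilon> \<and> \<epsilon> < \<epsilon>0 \<longrightarrow> (\<forall>\<delta>. 0 < \<delta> \<and> \<delta> < \<epsilon> \<longrightarrow>
       (\<exists>g :: real^'j \<Rightarrow> real.
          C2c_plus_R G g \<and> testH G d V (\<lambda>y. - g y)
        \<and> (\<forall>y\<in>closure G. g y \<ge> 0)
        \<and> (\<forall>y\<in>closure G. g y \<le> C * \<epsilon>)
        \<and> (\<forall>y\<in>closure G. norm (grad g y) \<le> C * sqrt \<epsilon>)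
        \<and> (\<forall>y\<in>closure G. \<bar>b y \<bullet> grad g y\<bar> \<le> C * sqrt \<epsilon>)
        \<and> (\<forall>y\<in>closure G \<inter> cball x r.
             let h = v \<bullet> (y - x);
                 L = (\<Sum>i\<in>UNIV. \<Sum>j\<in>UNIV. diffm sg y $ i $ j * pd2 i j g y)
             in (\<delta> + 2 * sqrt \<delta> < h \<and> h < \<epsilon> / 2 \<longrightarrow> L \<ge> c)
              \<and> (h \<ge> \<epsilon> \<longrightarrow> \<bar>L\<bar> \<le> C * sqrt \<epsilon>)
              \<and> (\<not> (\<delta> + 2 * sqrt \<delta> < h \<and> h < \<epsilon> / 2) \<and> \<not> (h \<ge> \<epsilon>) \<longrightarrow> L \<ge> 0)))))"
proof -
  have "finite V" "V \<subseteq> closure G"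
    using AV V_sub by (auto simp: assmV_def frontier_def)
  then show ?thesis
    using vertex_barrier_family[OF _ _ _ b_cont sigma_cont] unfolding vertex_barrier_def by blast
qed

end
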